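(* Let $k\ge 2$, let $\lambda_1,\ldots,\lambda_k$ be nonzero integers with $\gcd(\lambda_1,\ldots,\lambda_k)=1$, $g_i=\gcd(\lambda_j:j\ne i)$, and $p=\prod_{i=1}^k g_i$. Let $A\subset\mathbb{Z}$ be finite. For each $1\le i\le k$ write $A=\bigcup_{j=1}^{m_i}A_{ij}$ (disjoint) where the $A_{ij}$ are the nonempty intersections of $A$ with residue classes mod $g_i$, $A_{ij}=a_{ij}+g_i\cdot A'_{ij}$ with $0\le a_{ij}<g_i$. Similarly write $A=\bigcup_{e=1}^m P_e$ (disjoint) where the $P_e$ are the nonempty intersections of $A$ with residue classes mod $p$, $P_e=p_e+p\cdot P'_e$ with $0\le p_e<p$. For fixed $e$ and each $i$, let $e_i\in\{1,\dots,m_i\}$ be the index with $p_e\equiv a_{ie_i}\pmod{g_i}$ (so $P_e=\bigcap_i A_{ie_i}$). Suppose that $A'_{ie_i}$ is fully distributed mod $g_i$ for every $1\le i\le k$. Then either $P'_e$ is fully distributed mod $g_i$ for every $1\le i\le k$, or $$|\lambda_1\cdot A_{1e_1}+\cdots+\lambda_k\cdot A_{ke_k}|\ \ge\ |\lambda_1\cdot P_e+\cdots+\lambda_k\cdot P_e|+|P_e|.$$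
   Context: For an integer $d$ and a finite set $A$, $d\cdot A=\{da:a\in A\}$, $x+A=\{x+a:a\in A\}$; sums of sets are Minkowski sums. A set $A\subset\mathbb{Z}$ is fully distributed (FD) mod $q$ if it intersects every residue class mod $q$. The $g_i$ are pairwise coprime. *)

theory Defs
  imports "HOL-Number_Theory.Number_Theory"
begin

definition dil :: "int \<Rightarrow> int set \<Rightarrow> int set" where
  "dil d A = (\<lambda>a. d * a) ` A"

definition msum :: "nat \<Rightarrow> (nat \<Rightarrow> int set) \<Rightarrow> int set" where
  "msum k B = {(\<Sum>i<k. x i) | x. \<forall>i<k. x i \<in> B i}"

definition FD :: "int set \<Rightarrow> int \<Rightarrow> bool" where
  "FD A q \<longleftrightarrow> (\<forall>c. \<exists>a\<in>A. [a = c] (mod q))"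

definition rescl :: "int set \<Rightarrow> int \<Rightarrow> int \<Rightarrow> int set" where
  "rescl A q r = {a \<in> A. a mod q = r mod q}"

text \<open>The set A' with rescl A q r = (r mod q) + q * A'.\<close>
definition redcl :: "int set \<Rightarrow> int \<Rightarrow> int \<Rightarrow> int set" where
  "redcl A q r = (\<lambda>a. (a - r mod q) div q) ` rescl A q r"

end

theory Submission
  imports Defs
begin

text \<open>If some reduced class P' = redcl A p r misses a residue c modulo G = g j, pick
  a \<in> A in the class of r mod G with a \<equiv> r + p c (mod G^2); this is possible because the
  reduced class of r mod G is fully distributed mod G. Putting a in slot j, an element of
  P = rescl A p r in some other slot i0 and a fixed element of P elsewhere gives |P| sums
  in the large sumset. None of them lies in lam_1 P + ... + lam_k P: modulo G^2 every slot other
  than j contributes nothing to a difference (G divides both lam_i and p), so a coincidence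
  would force a \<equiv> r + p y (mod G^2) for some y \<in> P', hence y \<equiv> c (mod G) since p/G is
  coprime to G.\<close>

lemma msum_dil:
  "msum k (\<lambda>i. dil (lam i) (B i)) = {(\<Sum>i<k. lam i * z i) | z. \<forall>i<k. z i \<in> B i}"
proof (intro equalityI subsetI)
  fix s assume "s \<in> msum k (\<lambda>i. dil (lam i) (B i))"
  then obtain x where x: "s = (\<Sum>i<k. x i)" "\<forall>i<k. x i \<in> dil (lam i) (B i)"
    unfolding msum_def by blast
  then have "\<forall>i\<in>{..<k}. \<exists>z. z \<in> B i \<and> x i = lam i * z"
    unfolding dil_def by blast
  then obtain z where "\<forall>i\<in>{..<k}. z i \<in> B i \<and> x i = lam i * z i"
    by (metis bchoice)
  with x(1) show "s \<in> {(\<Sum>i<k. lam i * z i) | z. \<forall>i<k. z i \<in> B i}"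
    by auto
next
  fix s assume "s \<in> {(\<Sum>i<k. lam i * z i) | z. \<forall>i<k. z i \<in> B i}"
  then obtain z where "s = (\<Sum>i<k. lam i * z i)" "\<forall>i<k. z i \<in> B i"
    by blast
  then show "s \<in> msum k (\<lambda>i. dil (lam i) (B i))"
    unfolding msum_def dil_def by (intro CollectI exI[where x = "\<lambda>i. lam i * z i"]) auto
qed

lemma finite_msum:
  assumes "\<forall>i<k. finite (B i)"
  shows "finite (msum k B)"
proof (rule finite_subset)
  show "msum k B \<subseteq> (\<lambda>x. \<Sum>i<k. x i) ` PiE {..<k} B"
  proof
    fix s assume "s \<in> msum k B"
    then obtain x where "s = (\<Sum>i<k. x i)" "\<forall>i<k. x i \<in> B i"
      unfolding msum_def by blast
    then show "s \<in> (\<lambda>x. \<Sum>i<k. x i) ` PiE {..<k} B"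
      by (intro image_eqI[where x = "restrict x {..<k}"]) auto
  qed
  show "finite ((\<lambda>x. \<Sum>i<k. x i) ` PiE {..<k} B)"
    using assms by (intro finite_imageI finite_PiE) auto
qed

lemma msum_mono:
  assumes "\<forall>i<k. B i \<subseteq> C i"
  shows "msum k B \<subseteq> msum k C"
  using assms unfolding msum_def by blast

lemma rescl_subset_rescl:
  assumes "q dvd p"
  shows "rescl A p r \<subseteq> rescl A q r"
proof
  fix x assume "x \<in> rescl A p r"
  then have "x \<in> A" "(x mod p) mod q = (r mod p) mod q"
    unfolding rescl_def by simp_all
  then show "x \<in> rescl A q r"
    unfolding rescl_def using assms by (simp add: mod_mod_cancel)
qed

lemma rescl_cong:
  "x \<in> rescl A p r \<Longrightarrow> [x = r] (mod p)"
  unfolding rescl_def by (simp add: cong_def)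

lemma mem_redcl:
  assumes "r + p * y \<in> rescl A p r" "0 \<le> r" "r < p"
  shows "y \<in> redcl A p r"
proof -
  have "y = (r + p * y - r mod p) div p"
    using assms(2,3) by simp
  with assms(1) show ?thesis
    unfolding redcl_def by blast
qed

lemma FD_redcl_obtain_cong_square:
  fixes G :: int
  assumes "G \<noteq> 0" "FD (redcl A G r) G" "[t = r] (mod G)"
  obtains a where "a \<in> rescl A G r" "[a = t] (mod G * G)"
proof -
  have t: "t = G * (t div G) + r mod G"
    using assms(3) mult_div_mod_eq[of G t] unfolding cong_def by simp
  obtain a' where "a' \<in> redcl A G r" and a't: "[a' = t div G] (mod G)"
    using assms(2) unfolding FD_def by blast
  then obtain a where a: "a \<in> rescl A G r" and a': "a' = (a - r mod G) div G"
    unfolding redcl_def by blast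
  have "a mod G = r mod G"
    using a unfolding rescl_def by simp
  then have "a - r mod G = G * (a div G)"
    by (metis minus_mod_eq_mult_div)
  then have "a' = a div G"
    unfolding a' using assms(1) by simp
  then have "a = G * a' + r mod G"
    using mult_div_mod_eq[of G a] \<open>a mod G = r mod G\<close> by simp
  then have "a - t = G * (a' - t div G)"
    by (subst t) (simp add: algebra_simps)
  moreover have "G dvd a' - t div G"
    using a't by (simp add: cong_iff_dvd_diff)
  ultimately have "[a = t] (mod G * G)"
    by (simp add: cong_iff_dvd_diff)
  with a show thesis
    using that by blast
qed

lemma coprime_Gcd_remove:
  fixes f :: "'a \<Rightarrow> int"
  assumes "Gcd (f ` I) = 1" "j \<in> I"
  shows "coprime (f j) (Gcd (f ` (I - {j})))"
proof -
  have "f ` I = insert (f j) (f ` (I - {j}))"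
    using assms(2) by blast
  then show ?thesis
    using assms(1) by (simp add: coprime_iff_gcd_eq_1)
qed

lemma coprime_Gcd_remove_Gcd_remove:
  fixes f :: "'a \<Rightarrow> int"
  assumes "Gcd (f ` I) = 1" "i \<in> I" "j \<in> I" "i \<noteq> j"
  shows "coprime (Gcd (f ` (I - {i}))) (Gcd (f ` (I - {j})))"
proof (rule coprime_divisors)
  show "Gcd (f ` (I - {i})) dvd f j"
    using assms by (intro Gcd_dvd) auto
  show "coprime (f j) (Gcd (f ` (I - {j})))"
    using assms by (intro coprime_Gcd_remove)
qed simp

lemma coprime_prod_Gcd_remove:
  fixes f :: "'a \<Rightarrow> int"
  assumes "Gcd (f ` I) = 1" "j \<in> I"
  shows "coprime (\<Prod>i\<in>I - {j}. Gcd (f ` (I - {i}))) (Gcd (f ` (I - {j})))"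
  using assms by (intro prod_coprime_left) (simp add: coprime_Gcd_remove_Gcd_remove)

lemma card_msum_dil_ge:
  fixes lam w :: "nat \<Rightarrow> int"
  assumes "\<forall>i<k. finite (B i)" "i0 < k" "lam i0 \<noteq> 0" "\<forall>i<k. C i \<subseteq> B i"
    and "\<forall>i<k. w i \<in> B i" "X \<subseteq> B i0"
    and "\<forall>x\<in>X. (\<Sum>i<k. lam i * (w(i0 := x)) i) \<notin> msum k (\<lambda>i. dil (lam i) (C i))"
  shows "card (msum k (\<lambda>i. dil (lam i) (C i))) + card X
           \<le> card (msum k (\<lambda>i. dil (lam i) (B i)))"
proof -
  define f where "f x = (\<Sum>i<k. lam i * (w(i0 := x)) i)" for x
  let ?SB = "msum k (\<lambda>i. dil (lam i) (B i))" and ?SC = "msum k (\<lambda>i. dil (lam i) (C i))"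
  have f: "f x = lam i0 * x + (\<Sum>i\<in>{..<k} - {i0}. lam i * w i)" for x
    unfolding f_def using assms(2) by (simp add: sum.remove)
  have "inj_on f X"
    using assms(3) by (intro inj_onI) (simp add: f)
  moreover have "f ` X \<subseteq> ?SB"
    using assms(5,6) unfolding msum_dil f_def by fastforce
  moreover have "?SC \<subseteq> ?SB"
    using assms(4) by (intro msum_mono) (auto simp: dil_def)
  moreover have "finite ?SB"
    using assms(1) by (intro finite_msum) (simp add: dil_def)
  moreover have "?SC \<inter> f ` X = {}"
    using assms(7) unfolding f_def by blast
  ultimately have "card (?SC \<union> f ` X) = card ?SC + card (f ` X)"
    by (intro card_Un_disjoint) (auto intro: finite_subset)
  also have "card (f ` X) = card X"
    using \<open>inj_on f X\<close> by (rule card_image)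
  finally have "card ?SC + card X = card (?SC \<union> f ` X)" ..
  also have "\<dots> \<le> card ?SB"
    using \<open>finite ?SB\<close> \<open>f ` X \<subseteq> ?SB\<close> \<open>?SC \<subseteq> ?SB\<close> by (intro card_mono) auto
  finally show ?thesis .
qed

lemma sum_notin_msum_dil:
  fixes lam u :: "nat \<Rightarrow> int" and G q r c :: int
  assumes "j < k" "G \<noteq> 0" "coprime (lam j) G" "coprime q G"
    and "\<forall>i<k. i \<noteq> j \<longrightarrow> G dvd lam i"
    and "\<forall>x\<in>P. [x = r] (mod G * q)"
    and "\<forall>y. r + G * q * y \<in> P \<longrightarrow> \<not> [y = c] (mod G)"
    and "\<forall>i<k. i \<noteq> j \<longrightarrow> u i \<in> P"
    and "[u j = r + G * q * c] (mod G * G)"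
  shows "(\<Sum>i<k. lam i * u i) \<notin> msum k (\<lambda>i. dil (lam i) P)"
proof
  assume "(\<Sum>i<k. lam i * u i) \<in> msum k (\<lambda>i. dil (lam i) P)"
  then obtain z where z: "\<forall>i<k. z i \<in> P" and "(\<Sum>i<k. lam i * u i) = (\<Sum>i<k. lam i * z i)"
    unfolding msum_dil by blast
  then have "(\<Sum>i<k. lam i * (u i - z i)) = 0"
    by (simp add: right_diff_distrib sum_subtractf)
  then have "lam j * (z j - u j) = (\<Sum>i\<in>{..<k} - {j}. lam i * (u i - z i))"
    using assms(1) by (simp add: sum.remove algebra_simps)
  also have "G * G dvd \<dots>"
  proof (rule dvd_sum)
    fix i assume i: "i \<in> {..<k} - {j}"
    then have "[u i = r] (mod G * q)" "[z i = r] (mod G * q)"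
      using assms(6,8) z by auto
    then have "G * q dvd u i - z i"
      by (metis cong_iff_dvd_diff cong_sym cong_trans)
    then have "G dvd u i - z i"
      by (rule dvd_mult_left)
    then show "G * G dvd lam i * (u i - z i)"
      using assms(5) i by (simp add: mult_dvd_mono)
  qed
  finally have "G * G dvd z j - u j"
    using assms(3) by (simp add: coprime_dvd_mult_right_iff coprime_commute)
  have "z j \<in> P"
    using z assms(1) by blast
  define y where "y = (z j - r) div (G * q)"
  have "G * q dvd z j - r"
    using \<open>z j \<in> P\<close> assms(6) by (simp add: cong_iff_dvd_diff)
  from dvd_mult_div_cancel[OF this] have zj: "z j = r + G * q * y"
    unfolding y_def by linarith
  have "(z j - u j) + (u j - (r + G * q * c)) = G * (q * (y - c))"
    unfolding zj by (simp add: algebra_simps)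
  moreover have "G * G dvd (z j - u j) + (u j - (r + G * q * c))"
    using \<open>G * G dvd z j - u j\<close> assms(9) unfolding cong_iff_dvd_diff by (rule dvd_add)
  ultimately have "G dvd q * (y - c)"
    using assms(2) by simp
  then have "[y = c] (mod G)"
    using assms(4) by (simp add: cong_iff_dvd_diff coprime_dvd_mult_right_iff coprime_commute)
  then show False
    using assms(7) \<open>z j \<in> P\<close> zj by auto
qed

theorem mainTheorem4:
  fixes k :: nat and lam :: "nat \<Rightarrow> int" and g :: "nat \<Rightarrow> int"
    and p :: int and A :: "int set" and r :: int
  assumes "k \<ge> 2"
    and "\<forall>i<k. lam i \<noteq> 0"
    and "Gcd (lam ` {..<k}) = 1"
    and "\<forall>i<k. g i = Gcd (lam ` ({..<k} - {i}))"
    and "p = (\<Prod>i<k. g i)"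
    and "finite A"
    and "0 \<le> r" and "r < p"
    and "rescl A p r \<noteq> {}"
    and "\<forall>i<k. FD (redcl A (g i) r) (g i)"
  shows "(\<forall>i<k. FD (redcl A p r) (g i)) \<or>
         card (msum k (\<lambda>i. dil (lam i) (rescl A (g i) r)))
           \<ge> card (msum k (\<lambda>i. dil (lam i) (rescl A p r))) + card (rescl A p r)"
proof (cases "\<forall>i<k. FD (redcl A p r) (g i)")
  case False
  then obtain j c where j: "j < k" and c: "\<forall>y\<in>redcl A p r. \<not> [y = c] (mod g j)"
    unfolding FD_def by blast
  define i0 where "i0 = (if j = 0 then 1 else 0 :: nat)"
  have i0: "i0 < k" "i0 \<noteq> j"
    using assms(1) unfolding i0_def by auto
  define G q P where "G = g j" and "q = (\<Prod>i\<in>{..<k} - {j}. g i)" and "P = rescl A p r"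
  have p: "p = G * q"
    unfolding assms(5) G_def q_def using j by (simp add: prod.remove)
  have "lam i0 \<in> lam ` ({..<k} - {j})" "lam i0 \<noteq> 0"
    using assms(2) i0 by auto
  then have "G \<noteq> 0"
    unfolding G_def using assms(4) j by auto
  have G: "coprime (lam j) G" "coprime q G" "\<forall>i<k. i \<noteq> j \<longrightarrow> G dvd lam i"
    unfolding G_def q_def using assms(3,4) j coprime_prod_Gcd_remove[of lam "{..<k}" j]
    by (auto simp: coprime_Gcd_remove intro: Gcd_dvd)
  have P: "\<forall>x\<in>P. [x = r] (mod G * q)" "\<forall>y. r + G * q * y \<in> P \<longrightarrow> \<not> [y = c] (mod G)"
    using c[folded G_def] mem_redcl[OF _ assms(7,8)] unfolding P_def p[symmetric]
    by (auto intro: rescl_cong)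
  have P_sub: "\<forall>i<k. P \<subseteq> rescl A (g i) r"
    unfolding P_def assms(5) by (auto intro!: rescl_subset_rescl dvd_prodI)
  have "[r + G * q * c = r] (mod G)"
    by (simp add: cong_iff_dvd_diff)
  with \<open>G \<noteq> 0\<close> assms(10) j
  obtain a where a: "a \<in> rescl A G r" "[a = r + G * q * c] (mod G * G)"
    unfolding G_def by (metis FD_redcl_obtain_cong_square)
  obtain p0 where "p0 \<in> P"
    using assms(9) P_def by blast
  define w where "w = (\<lambda>_. p0)(j := a)"
  have "(\<Sum>i<k. lam i * (w(i0 := x)) i) \<notin> msum k (\<lambda>i. dil (lam i) P)" if "x \<in> P" for x
    by (rule sum_notin_msum_dil[OF j \<open>G \<noteq> 0\<close> G P])
      (use that \<open>p0 \<in> P\<close> a(2) i0(2) in \<open>simp_all add: w_def\<close>)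
  moreover have "\<forall>i<k. w i \<in> rescl A (g i) r"
    using P_sub \<open>p0 \<in> P\<close> a(1) unfolding w_def G_def by auto
  ultimately have "card (msum k (\<lambda>i. dil (lam i) P)) + card P
                     \<le> card (msum k (\<lambda>i. dil (lam i) (rescl A (g i) r)))"
    using assms(2,6) i0 P_sub by (intro card_msum_dil_ge) (auto simp: rescl_def)
  then show ?thesis
    unfolding P_def by simp
qed simp

end
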